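(* Let $H$ be a Hopf algebra over a field $k$, $(d,\Omega)$ a left-covariant FODC over $H$, and $X\in\Omega^\ast=\operatorname{Hom}_{-H}(\Omega,H)$ with $\rho(X)(a)=X(da)$. Consider the conditions (A) $\rho(X)=(I\otimes\varepsilon)\circ(I\otimes\rho(X))\circ\Delta$, i.e. $\rho(X)(a)=\sum a_1\,\varepsilon(\rho(X)(a_2))$ for all $a\in H$; (B) $\rho(X)\circ L=L\circ\rho(X)$ for every left translation $L$ of $H$. Then (A) implies (B). If moreover $\operatorname{Alg}(H,k)$ separates the elements of $H$ (for all $a\neq b$ in $H$ there is $\varphi\in\operatorname{Alg}(H,k)$ with $\varphi(a)\neq\varphi(b)$), then (B) implies (A), so (A) and (B) are equivalent.
   Context: A FODC over $H$ is a pair $(d,\Omega)$ with $\Omega$ an $H$-bimodule, $d\colon H\to\Omega$ a derivation, and $\Omega$ generated as bimodule by $d(H)$; left-covariant means there is $\Delta_l\colon\Omega\to H\otimes\Omega$ with $\Delta_l\circ d=(I\otimes d)\circ\Delta$ and $(\varepsilon\otimes I)\circ\Delta_l=I$. A left translation on $H$ is an algebra homomorphism $L\colon H\to H$ with $\Delta\circ L=(L\otimes I)\circ\Delta$; these are exactly the maps $(\varphi\otimes I)\circ\Delta$ with $\varphi\in\operatorname{Alg}(H,k)$, the unital algebra homomorphisms $H\to k$. *)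

theory Defs
  imports Main "HOL.Vector_Spaces"
begin

text \<open>Elements of tensor products are represented by finite formal sums of simple
tensors (lists of pairs / triples, i.e. Sweedler-type representations).  Two such
formal sums denote the same element of the tensor product over the field k iff they
agree under all products of k-linear functionals (over a field, elementary tensors
of functionals separate the points of the tensor product).\<close>

definition tensor_eq ::
  "('k::field \<Rightarrow> 'a::ab_group_add \<Rightarrow> 'a) \<Rightarrow> ('k \<Rightarrow> 'b::ab_group_add \<Rightarrow> 'b)
   \<Rightarrow> ('a \<times> 'b) list \<Rightarrow> ('a \<times> 'b) list \<Rightarrow> bool" where
  "tensor_eq sa sb xs ys \<longleftrightarrow>
     (\<forall>f g. Vector_Spaces.linear sa (*) f \<and> Vector_Spaces.linear sb (*) g \<longrightarrow>
        sum_list (map (\<lambda>(x, y). f x * g y) xs) = sum_list (map (\<lambda>(x, y). f x * g y) ys))"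

definition tensor_eq3 ::
  "('k::field \<Rightarrow> 'a::ab_group_add \<Rightarrow> 'a) \<Rightarrow> ('k \<Rightarrow> 'b::ab_group_add \<Rightarrow> 'b)
   \<Rightarrow> ('k \<Rightarrow> 'c::ab_group_add \<Rightarrow> 'c)
   \<Rightarrow> ('a \<times> 'b \<times> 'c) list \<Rightarrow> ('a \<times> 'b \<times> 'c) list \<Rightarrow> bool" where
  "tensor_eq3 sa sb sc xs ys \<longleftrightarrow>
     (\<forall>f g h. Vector_Spaces.linear sa (*) f \<and> Vector_Spaces.linear sb (*) g
          \<and> Vector_Spaces.linear sc (*) h \<longrightarrow>
        sum_list (map (\<lambda>(x, y, z). f x * g y * h z) xs)
        = sum_list (map (\<lambda>(x, y, z). f x * g y * h z) ys))"

definition k_algebra :: "('k::field \<Rightarrow> 'h::ring_1 \<Rightarrow> 'h) \<Rightarrow> bool" where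
  "k_algebra sc \<longleftrightarrow> vector_space sc \<and>
     (\<forall>c a b. sc c (a * b) = sc c a * b \<and> sc c (a * b) = a * sc c b)"

definition hopf_algebra ::
  "('k::field \<Rightarrow> 'h::ring_1 \<Rightarrow> 'h) \<Rightarrow> ('h \<Rightarrow> ('h \<times> 'h) list) \<Rightarrow> ('h \<Rightarrow> 'k)
   \<Rightarrow> ('h \<Rightarrow> 'h) \<Rightarrow> bool" where
  "hopf_algebra sc Delta eps S \<longleftrightarrow>
     k_algebra sc \<and>
     \<comment> \<open>\<Delta> is a k-linear, unital algebra map H \<rightarrow> H \<otimes> H\<close>
     (\<forall>a b. tensor_eq sc sc (Delta (a + b)) (Delta a @ Delta b)) \<and>
     (\<forall>c a. tensor_eq sc sc (Delta (sc c a)) (map (\<lambda>(x, y). (sc c x, y)) (Delta a))) \<and>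
     (\<forall>a b. tensor_eq sc sc (Delta (a * b))
              (concat (map (\<lambda>(x, y). map (\<lambda>(x', y'). (x * x', y * y')) (Delta b)) (Delta a)))) \<and>
     tensor_eq sc sc (Delta 1) [(1, 1)] \<and>
     \<comment> \<open>coassociativity\<close>
     (\<forall>a. tensor_eq3 sc sc sc
            (concat (map (\<lambda>(x, y). map (\<lambda>(x1, x2). (x1, x2, y)) (Delta x)) (Delta a)))
            (concat (map (\<lambda>(x, y). map (\<lambda>(y1, y2). (x, y1, y2)) (Delta y)) (Delta a)))) \<and>
     \<comment> \<open>counit: a k-linear unital algebra map H \<rightarrow> k\<close>
     Vector_Spaces.linear sc (*) eps \<and> (\<forall>a b. eps (a * b) = eps a * eps b) \<and> eps 1 = 1 \<and>
     (\<forall>a. sum_list (map (\<lambda>(x, y). sc (eps x) y) (Delta a)) = a) \<and>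
     (\<forall>a. sum_list (map (\<lambda>(x, y). sc (eps y) x) (Delta a)) = a) \<and>
     \<comment> \<open>antipode\<close>
     Vector_Spaces.linear sc sc S \<and>
     (\<forall>a. sum_list (map (\<lambda>(x, y). S x * y) (Delta a)) = sc (eps a) 1) \<and>
     (\<forall>a. sum_list (map (\<lambda>(x, y). x * S y) (Delta a)) = sc (eps a) 1)"

definition bimodule ::
  "('k::field \<Rightarrow> 'h::ring_1 \<Rightarrow> 'h) \<Rightarrow> ('k \<Rightarrow> 'o::ab_group_add \<Rightarrow> 'o)
   \<Rightarrow> ('h \<Rightarrow> 'o \<Rightarrow> 'o) \<Rightarrow> ('o \<Rightarrow> 'h \<Rightarrow> 'o) \<Rightarrow> bool" where
  "bimodule sc so la ra \<longleftrightarrow>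
     vector_space so \<and>
     (\<forall>a. Vector_Spaces.linear so so (la a)) \<and> (\<forall>w. Vector_Spaces.linear sc so (\<lambda>a. la a w)) \<and>
     (\<forall>a. Vector_Spaces.linear so so (\<lambda>w. ra w a)) \<and> (\<forall>w. Vector_Spaces.linear sc so (ra w)) \<and>
     (\<forall>a b w. la (a * b) w = la a (la b w)) \<and> (\<forall>w. la 1 w = w) \<and>
     (\<forall>a b w. ra w (a * b) = ra (ra w a) b) \<and> (\<forall>w. ra w 1 = w) \<and>
     (\<forall>a b w. la a (ra w b) = ra (la a w) b)"

definition fodc ::
  "('k::field \<Rightarrow> 'h::ring_1 \<Rightarrow> 'h) \<Rightarrow> ('k \<Rightarrow> 'o::ab_group_add \<Rightarrow> 'o)
   \<Rightarrow> ('h \<Rightarrow> 'o \<Rightarrow> 'o) \<Rightarrow> ('o \<Rightarrow> 'h \<Rightarrow> 'o) \<Rightarrow> ('h \<Rightarrow> 'o) \<Rightarrow> bool" where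
  "fodc sc so la ra d \<longleftrightarrow>
     bimodule sc so la ra \<and>
     Vector_Spaces.linear sc so d \<and> (\<forall>a b. d (a * b) = ra (d a) b + la a (d b)) \<and>
     (\<forall>w. \<exists>ts. w = sum_list (map (\<lambda>(a, b, c). ra (la a (d b)) c) ts))"

definition left_covariant ::
  "('k::field \<Rightarrow> 'h::ring_1 \<Rightarrow> 'h) \<Rightarrow> ('k \<Rightarrow> 'o::ab_group_add \<Rightarrow> 'o)
   \<Rightarrow> ('h \<Rightarrow> ('h \<times> 'h) list) \<Rightarrow> ('h \<Rightarrow> 'k) \<Rightarrow> ('h \<Rightarrow> 'o)
   \<Rightarrow> ('o \<Rightarrow> ('h \<times> 'o) list) \<Rightarrow> bool" where
  "left_covariant sc so Delta eps d Dl \<longleftrightarrow>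
     (\<forall>w w'. tensor_eq sc so (Dl (w + w')) (Dl w @ Dl w')) \<and>
     (\<forall>c w. tensor_eq sc so (Dl (so c w)) (map (\<lambda>(x, y). (sc c x, y)) (Dl w))) \<and>
     (\<forall>a. tensor_eq sc so (Dl (d a)) (map (\<lambda>(x, y). (x, d y)) (Delta a))) \<and>
     (\<forall>w. sum_list (map (\<lambda>(x, y). so (eps x) y) (Dl w)) = w)"

definition right_module_hom ::
  "('k::field \<Rightarrow> 'h::ring_1 \<Rightarrow> 'h) \<Rightarrow> ('k \<Rightarrow> 'o::ab_group_add \<Rightarrow> 'o)
   \<Rightarrow> ('o \<Rightarrow> 'h \<Rightarrow> 'o) \<Rightarrow> ('o \<Rightarrow> 'h) \<Rightarrow> bool" where
  "right_module_hom sc so ra X \<longleftrightarrow>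
     Vector_Spaces.linear so sc X \<and> (\<forall>w a. X (ra w a) = X w * a)"

definition alg_hom_k :: "('k::field \<Rightarrow> 'h::ring_1 \<Rightarrow> 'h) \<Rightarrow> ('h \<Rightarrow> 'k) \<Rightarrow> bool" where
  "alg_hom_k sc phi \<longleftrightarrow>
     Vector_Spaces.linear sc (*) phi \<and> (\<forall>a b. phi (a * b) = phi a * phi b) \<and> phi 1 = 1"

definition left_translation ::
  "('k::field \<Rightarrow> 'h::ring_1 \<Rightarrow> 'h) \<Rightarrow> ('h \<Rightarrow> ('h \<times> 'h) list) \<Rightarrow> ('h \<Rightarrow> 'h) \<Rightarrow> bool" where
  "left_translation sc Delta L \<longleftrightarrow>
     Vector_Spaces.linear sc sc L \<and> (\<forall>a b. L (a * b) = L a * L b) \<and> L 1 = 1 \<and>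
     (\<forall>a. tensor_eq sc sc (Delta (L a)) (map (\<lambda>(x, y). (L x, y)) (Delta a)))"

end

theory Submission imports Defs begin

text \<open>A left translation L satisfies
  \<Delta> \<circ> L = (L \<otimes> I) \<circ> \<Delta>, hence \<rho>(X)(L a) = (I \<otimes> \<epsilon>\<rho>(X))((L \<otimes> I)(\<Delta> a)) = L(\<rho>(X) a).
  Conversely, every \<phi> \<in> Alg(H,k) gives the left translation L_\<phi> = (\<phi> \<otimes> I) \<circ> \<Delta>
  (by coassociativity), and \<epsilon> \<circ> L_\<phi> = \<phi> by the counit axiom. So (B) yields
  \<phi>(\<rho>(X) a) = \<epsilon>(\<rho>(X)(L_\<phi> a)) = (\<phi> \<otimes> \<epsilon>\<rho>(X))(\<Delta> a) = \<phi>((I \<otimes> \<epsilon>\<rho>(X))(\<Delta> a)),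
  and (A) follows when such \<phi> separate points. Only the k-linearity of \<rho>(X) = X \<circ> d is
  used, not the covariance of the calculus.

  Tensors are formal sums compared through products of linear functionals, so every
  step above applies a contraction I \<otimes> g or g \<otimes> I to a tensor equation; the results
  agree because linear functionals separate the points of a vector space.\<close>

lemma
  assumes "Vector_Spaces.linear s1 s2 f"
  shows linear_map_add: "f (x + y) = f x + f y"
    and linear_map_scale: "f (s1 c x) = s2 c (f x)"
  using assms by (simp_all add: linear_iff)

lemma linear_map_zero: "Vector_Spaces.linear s1 s2 f \<Longrightarrow> f 0 = 0"
  by (metis add_cancel_right_right linear_map_add)

lemma linear_sum_list_map:
  "Vector_Spaces.linear s1 s2 f \<Longrightarrow> f (sum_list (map h xs)) = sum_list (map (\<lambda>x. f (h x)) xs)"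
  by (induction xs) (auto simp: linear_map_add linear_map_zero)

lemma vector_space_scale_sum_list:
  "vector_space s \<Longrightarrow> s c (sum_list (map h xs)) = sum_list (map (\<lambda>x. s c (h x)) xs)"
  by (simp add: linear_sum_list_map[OF vector_space.linear_scale_self])

lemma vector_space_field_self: "vector_space ((*) :: 'k::field \<Rightarrow> 'k \<Rightarrow> 'k)"
  by unfold_locales (auto simp: algebra_simps)

lemma sum_list_map_concat:
  "sum_list (map f (concat xss)) = sum_list (map (\<lambda>xs. sum_list (map f xs)) xss)"
  by (induction xss) auto

lemma linear_functionals_separate:
  assumes "vector_space s" and "\<And>f. Vector_Spaces.linear s (*) f \<Longrightarrow> f u = f v"
  shows "u = v"
proof (rule ccontr)
  assume "u \<noteq> v"
  interpret vector_space_pair s "(*) :: 'a \<Rightarrow> 'a \<Rightarrow> 'a"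
    using assms(1) vector_space_field_self by (simp add: vector_space_pair_def)
  from \<open>u \<noteq> v\<close> have "vs1.independent {u - v}" by simp
  then obtain g where g: "Vector_Spaces.linear s (*) g" "g (u - v) = 1"
    using linear_independent_extend[of "{u - v}" "\<lambda>_. 1"] by auto
  then have "g u - g v = 1" by (simp add: linear_diff)
  with assms(2)[OF g(1)] show False by simp
qed

lemma tensor_eq_contract_right:
  assumes "tensor_eq sa sb xs ys" "vector_space sa" "Vector_Spaces.linear sb (*) g"
  shows "sum_list (map (\<lambda>(x, y). sa (g y) x) xs) = sum_list (map (\<lambda>(x, y). sa (g y) x) ys)"
proof (rule linear_functionals_separate[OF assms(2)])
  fix f assume f: "Vector_Spaces.linear sa (*) f"
  have contract: "f (sum_list (map (\<lambda>(x, y). sa (g y) x) zs)) = sum_list (map (\<lambda>(x, y). f x * g y) zs)"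
    for zs by (simp add: linear_sum_list_map[OF f] linear_map_scale[OF f] split_def mult.commute)
  show "f (sum_list (map (\<lambda>(x, y). sa (g y) x) xs)) = f (sum_list (map (\<lambda>(x, y). sa (g y) x) ys))"
    unfolding contract using assms(1,3) f unfolding tensor_eq_def by blast
qed

lemma tensor_eq_contract_left:
  assumes "tensor_eq sa sb xs ys" "vector_space sb" "Vector_Spaces.linear sa (*) g"
  shows "sum_list (map (\<lambda>(x, y). sb (g x) y) xs) = sum_list (map (\<lambda>(x, y). sb (g x) y) ys)"
proof (rule linear_functionals_separate[OF assms(2)])
  fix f assume f: "Vector_Spaces.linear sb (*) f"
  have contract: "f (sum_list (map (\<lambda>(x, y). sb (g x) y) zs)) = sum_list (map (\<lambda>(x, y). g x * f y) zs)"
    for zs by (simp add: linear_sum_list_map[OF f] linear_map_scale[OF f] split_def)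
  show "f (sum_list (map (\<lambda>(x, y). sb (g x) y) xs)) = f (sum_list (map (\<lambda>(x, y). sb (g x) y) ys))"
    unfolding contract using assms(1,3) f unfolding tensor_eq_def by blast
qed

lemma hopf_algebraD:
  fixes sc :: "'k::field \<Rightarrow> 'h::ring_1 \<Rightarrow> 'h"
  assumes "hopf_algebra sc Delta eps S"
  shows hopf_algebra_vector_space: "vector_space sc"
    and hopf_algebra_scale_mult_left: "sc c (a * b) = sc c a * b"
    and hopf_algebra_scale_mult_right: "sc c (a * b) = a * sc c b"
    and hopf_algebra_coproduct_add: "tensor_eq sc sc (Delta (a + b)) (Delta a @ Delta b)"
    and hopf_algebra_coproduct_scale:
      "tensor_eq sc sc (Delta (sc c a)) (map (\<lambda>(x, y). (sc c x, y)) (Delta a))"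
    and hopf_algebra_coproduct_mult: "tensor_eq sc sc (Delta (a * b))
      (concat (map (\<lambda>(x, y). map (\<lambda>(x', y'). (x * x', y * y')) (Delta b)) (Delta a)))"
    and hopf_algebra_coproduct_one: "tensor_eq sc sc (Delta 1) [(1, 1)]"
    and hopf_algebra_coassoc: "tensor_eq3 sc sc sc
      (concat (map (\<lambda>(x, y). map (\<lambda>(x1, x2). (x1, x2, y)) (Delta x)) (Delta a)))
      (concat (map (\<lambda>(x, y). map (\<lambda>(y1, y2). (x, y1, y2)) (Delta y)) (Delta a)))"
    and hopf_algebra_counit_linear: "Vector_Spaces.linear sc (*) eps"
    and hopf_algebra_counit_right: "sum_list (map (\<lambda>(x, y). sc (eps y) x) (Delta a)) = a"
  using assms unfolding hopf_algebra_def k_algebra_def by blast+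

definition translation_by :: "('k \<Rightarrow> 'h::monoid_add \<Rightarrow> 'h)
    \<Rightarrow> ('h \<Rightarrow> ('h \<times> 'h) list) \<Rightarrow> ('h \<Rightarrow> 'k) \<Rightarrow> 'h \<Rightarrow> 'h"
  where "translation_by sc Delta phi a = sum_list (map (\<lambda>(x, y). sc (phi x) y) (Delta a))"

lemma linear_translation_by:
  assumes "hopf_algebra sc Delta eps S" "Vector_Spaces.linear sc (*) phi"
  shows "Vector_Spaces.linear sc sc (translation_by sc Delta phi)"
proof -
  note VS = hopf_algebra_vector_space[OF assms(1)]
  note contract = tensor_eq_contract_left[OF _ VS assms(2)]
  have "translation_by sc Delta phi (sc c a) = sc c (translation_by sc Delta phi a)" for c a
  proof -
    have "translation_by sc Delta phi (sc c a)
        = sum_list (map (\<lambda>(x, y). sc c (sc (phi x) y)) (Delta a))"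
      unfolding translation_by_def contract[OF hopf_algebra_coproduct_scale[OF assms(1)]]
      using VS by (simp add: split_def o_def linear_map_scale[OF assms(2)] vector_space.vector_space_assms(3))
    then show ?thesis
      by (simp add: translation_by_def vector_space_scale_sum_list[OF VS] split_def)
  qed
  moreover have "translation_by sc Delta phi (a + b)
      = translation_by sc Delta phi a + translation_by sc Delta phi b" for a b
    unfolding translation_by_def contract[OF hopf_algebra_coproduct_add[OF assms(1)]] by simp
  ultimately show ?thesis
    using VS by (simp add: linear_iff)
qed

lemma translation_by_mult:
  assumes "hopf_algebra sc Delta eps S" "alg_hom_k sc phi"
  shows "translation_by sc Delta phi (a * b) = translation_by sc Delta phi a * translation_by sc Delta phi b"
proof -
  note VS = hopf_algebra_vector_space[OF assms(1)]
  have phi: "Vector_Spaces.linear sc (*) phi" "phi (x * y) = phi x * phi y" for x y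
    using assms(2) unfolding alg_hom_k_def by auto
  have scale_mult: "sc c x * sc c' y = sc (c * c') (x * y)" for c c' x y
    using VS hopf_algebra_scale_mult_left[OF assms(1)] hopf_algebra_scale_mult_right[OF assms(1)]
    by (metis vector_space.vector_space_assms(3))
  have "translation_by sc Delta phi (a * b) = sum_list (map (\<lambda>(x, y).
      sum_list (map (\<lambda>(x', y'). sc (phi x) y * sc (phi x') y') (Delta b))) (Delta a))"
    unfolding translation_by_def
      tensor_eq_contract_left[OF hopf_algebra_coproduct_mult[OF assms(1)] VS phi(1)]
      sum_list_map_concat
    by (simp add: split_def o_def phi(2) scale_mult)
  then show ?thesis
    by (simp add: translation_by_def split_def sum_list_const_mult sum_list_mult_const)
qed

lemma translation_by_one:
  assumes "hopf_algebra sc Delta eps S" "alg_hom_k sc phi"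
  shows "translation_by sc Delta phi 1 = 1"
  using assms hopf_algebra_vector_space[OF assms(1)]
  unfolding translation_by_def alg_hom_k_def
  by (simp add: tensor_eq_contract_left[OF hopf_algebra_coproduct_one]
      vector_space.vector_space_assms(4))

lemma linear_coproduct_pairing:
  assumes "hopf_algebra sc Delta eps S"
    and f: "Vector_Spaces.linear sc (*) f" and g: "Vector_Spaces.linear sc (*) g"
  shows "Vector_Spaces.linear sc (*) (\<lambda>a. sum_list (map (\<lambda>(x, y). f x * g y) (Delta a)))"
  unfolding linear_iff
proof (intro conjI allI)
  fix a b show "sum_list (map (\<lambda>(x, y). f x * g y) (Delta (a + b)))
      = sum_list (map (\<lambda>(x, y). f x * g y) (Delta a)) + sum_list (map (\<lambda>(x, y). f x * g y) (Delta b))"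
    using hopf_algebra_coproduct_add[OF assms(1)] f g unfolding tensor_eq_def by auto
next
  fix c a
  have "sum_list (map (\<lambda>(x, y). f x * g y) (Delta (sc c a)))
      = sum_list (map (\<lambda>(x, y). f (sc c x) * g y) (Delta a))"
    using hopf_algebra_coproduct_scale[OF assms(1)] f g
    unfolding tensor_eq_def by (auto simp: split_def o_def)
  then show "sum_list (map (\<lambda>(x, y). f x * g y) (Delta (sc c a)))
      = c * sum_list (map (\<lambda>(x, y). f x * g y) (Delta a))"
    by (simp add: linear_map_scale[OF f] split_def sum_list_const_mult[symmetric] mult.assoc)
qed (use hopf_algebra_vector_space[OF assms(1)] vector_space_field_self in auto)

lemma coproduct_translation_by:
  assumes "hopf_algebra sc Delta eps S" and phi: "Vector_Spaces.linear sc (*) phi"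
  shows "tensor_eq sc sc (Delta (translation_by sc Delta phi a))
    (map (\<lambda>(x, y). (translation_by sc Delta phi x, y)) (Delta a))"
  unfolding tensor_eq_def
proof (intro allI impI, elim conjE)
  fix f g assume f: "Vector_Spaces.linear sc (*) f" and g: "Vector_Spaces.linear sc (*) g"
  define T where "T a = sum_list (map (\<lambda>(x, y). f x * g y) (Delta a))" for a
  have T: "Vector_Spaces.linear sc (*) T"
    unfolding T_def by (rule linear_coproduct_pairing[OF assms(1) f g])
  have "T (translation_by sc Delta phi a) = sum_list (map (\<lambda>(x, y). phi x * T y) (Delta a))"
    by (simp add: translation_by_def linear_sum_list_map[OF T] split_def linear_map_scale[OF T])
  also have "\<dots> = sum_list (map (\<lambda>(x, y, z). phi x * f y * g z)
      (concat (map (\<lambda>(x, y). map (\<lambda>(y1, y2). (x, y1, y2)) (Delta y)) (Delta a))))"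
    unfolding T_def sum_list_map_concat
    by (simp add: split_def o_def sum_list_const_mult[symmetric] mult.assoc)
  also have "\<dots> = sum_list (map (\<lambda>(x, y, z). phi x * f y * g z)
      (concat (map (\<lambda>(x, y). map (\<lambda>(x1, x2). (x1, x2, y)) (Delta x)) (Delta a))))"
    using hopf_algebra_coassoc[OF assms(1), of a] phi f g unfolding tensor_eq3_def by metis
  also have "\<dots> = sum_list (map (\<lambda>(x, y). f (translation_by sc Delta phi x) * g y) (Delta a))"
    unfolding sum_list_map_concat translation_by_def linear_sum_list_map[OF f]
    by (simp add: split_def o_def sum_list_mult_const linear_map_scale[OF f])
  finally show "sum_list (map (\<lambda>(x, y). f x * g y) (Delta (translation_by sc Delta phi a))) =
      sum_list (map (\<lambda>(x, y). f x * g y) (map (\<lambda>(x, y). (translation_by sc Delta phi x, y)) (Delta a)))"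
    by (simp add: T_def split_def o_def)
qed

lemma left_translation_translation_by:
  assumes "hopf_algebra sc Delta eps S" "alg_hom_k sc phi"
  shows "left_translation sc Delta (translation_by sc Delta phi)"
  using assms linear_translation_by translation_by_mult translation_by_one coproduct_translation_by
  unfolding left_translation_def alg_hom_k_def by metis

lemma counit_translation_by:
  assumes "hopf_algebra sc Delta eps S" "Vector_Spaces.linear sc (*) phi"
  shows "eps (translation_by sc Delta phi a) = phi a"
proof -
  note eps = hopf_algebra_counit_linear[OF assms(1)]
  have "eps (translation_by sc Delta phi a) = sum_list (map (\<lambda>(x, y). phi x * eps y) (Delta a))"
    by (simp add: translation_by_def linear_sum_list_map[OF eps] linear_map_scale[OF eps] split_def)
  also have "\<dots> = phi (sum_list (map (\<lambda>(x, y). sc (eps y) x) (Delta a)))"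
    by (simp add: linear_sum_list_map[OF assms(2)] linear_map_scale[OF assms(2)] split_def mult.commute)
  finally show ?thesis
    by (simp add: hopf_algebra_counit_right[OF assms(1)])
qed

lemma commutes_with_left_translation:
  assumes "hopf_algebra sc Delta eps S" and R: "Vector_Spaces.linear sc sc R"
    and R_eq: "\<And>a. R a = sum_list (map (\<lambda>(x, y). sc (eps (R y)) x) (Delta a))"
    and "left_translation sc Delta L"
  shows "R (L a) = L (R a)"
proof -
  have L: "Vector_Spaces.linear sc sc L"
    and coproduct_L: "tensor_eq sc sc (Delta (L a)) (map (\<lambda>(x, y). (L x, y)) (Delta a))"
    using assms(4) unfolding left_translation_def by blast+
  have eps_R: "Vector_Spaces.linear sc (*) (\<lambda>y. eps (R y))"
    using Vector_Spaces.linear_compose[OF R hopf_algebra_counit_linear[OF assms(1)]]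
    by (simp add: o_def)
  have "R (L a) = sum_list (map (\<lambda>(x, y). sc (eps (R y)) x) (map (\<lambda>(x, y). (L x, y)) (Delta a)))"
    unfolding R_eq[of "L a"]
    by (rule tensor_eq_contract_right[OF coproduct_L hopf_algebra_vector_space[OF assms(1)] eps_R])
  also have "\<dots> = L (R a)"
    by (subst (2) R_eq) (simp add: linear_sum_list_map[OF L] linear_map_scale[OF L] split_def o_def)
  finally show ?thesis .
qed

lemma contraction_formula_if_commutes_with_translations:
  assumes "hopf_algebra sc Delta eps S" and R: "Vector_Spaces.linear sc sc R"
    and commute: "\<And>phi a. alg_hom_k sc phi \<Longrightarrow>
      R (translation_by sc Delta phi a) = translation_by sc Delta phi (R a)"
    and separating: "\<And>a b. a \<noteq> b \<Longrightarrow> \<exists>phi. alg_hom_k sc phi \<and> phi a \<noteq> phi b"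
  shows "R a = sum_list (map (\<lambda>(x, y). sc (eps (R y)) x) (Delta a))"
proof (rule ccontr)
  let ?rhs = "sum_list (map (\<lambda>(x, y). sc (eps (R y)) x) (Delta a))"
  assume "R a \<noteq> ?rhs"
  then obtain phi where alg_hom: "alg_hom_k sc phi" and "phi (R a) \<noteq> phi ?rhs"
    using separating by blast
  have phi: "Vector_Spaces.linear sc (*) phi"
    using alg_hom unfolding alg_hom_k_def by blast
  have eps_R: "Vector_Spaces.linear sc (*) (\<lambda>y. eps (R y))"
    using Vector_Spaces.linear_compose[OF R hopf_algebra_counit_linear[OF assms(1)]]
    by (simp add: o_def)
  have "phi (R a) = eps (translation_by sc Delta phi (R a))"
    by (simp add: counit_translation_by[OF assms(1) phi])
  also have "\<dots> = eps (R (translation_by sc Delta phi a))"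
    by (simp add: commute[OF alg_hom])
  also have "\<dots> = sum_list (map (\<lambda>(x, y). phi x * eps (R y)) (Delta a))"
    by (simp add: translation_by_def linear_sum_list_map[OF eps_R] linear_map_scale[OF eps_R] split_def)
  also have "\<dots> = phi ?rhs"
    by (simp add: linear_sum_list_map[OF phi] linear_map_scale[OF phi] split_def mult.commute)
  finally show False
    using \<open>phi (R a) \<noteq> phi ?rhs\<close> by contradiction
qed

theorem mainTheorem11:
  fixes sc :: "'k::field \<Rightarrow> 'h::ring_1 \<Rightarrow> 'h"
    and Delta :: "'h \<Rightarrow> ('h \<times> 'h) list" and eps :: "'h \<Rightarrow> 'k" and S :: "'h \<Rightarrow> 'h"
    and so :: "'k \<Rightarrow> 'o::ab_group_add \<Rightarrow> 'o"
    and la :: "'h \<Rightarrow> 'o \<Rightarrow> 'o" and ra :: "'o \<Rightarrow> 'h \<Rightarrow> 'o"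
    and d :: "'h \<Rightarrow> 'o" and Dl :: "'o \<Rightarrow> ('h \<times> 'o) list"
    and X :: "'o \<Rightarrow> 'h"
  assumes "hopf_algebra sc Delta eps S"
    and "fodc sc so la ra d"
    and "left_covariant sc so Delta eps d Dl"
    and "right_module_hom sc so ra X"
  defines "rhoX \<equiv> (\<lambda>a. X (d a))"
  defines "condA \<equiv> (\<forall>a. rhoX a = sum_list (map (\<lambda>(x, y). sc (eps (rhoX y)) x) (Delta a)))"
  defines "condB \<equiv> (\<forall>L. left_translation sc Delta L \<longrightarrow> (\<forall>a. rhoX (L a) = L (rhoX a)))"
  shows "(condA \<longrightarrow> condB) \<and>
         ((\<forall>a b. a \<noteq> b \<longrightarrow> (\<exists>phi. alg_hom_k sc phi \<and> phi a \<noteq> phi b)) \<longrightarrow> (condA \<longleftrightarrow> condB))"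
proof -
  have rhoX: "Vector_Spaces.linear sc sc rhoX"
    using Vector_Spaces.linear_compose[of sc so d sc X] assms(2,4)
    unfolding rhoX_def fodc_def right_module_hom_def by (simp add: o_def)
  have A_imp_B: "condB" if condA
    using commutes_with_left_translation[OF assms(1) rhoX] \<open>condA\<close>
    unfolding condA_def condB_def by blast
  have B_imp_A: "condA"
    if condB and "\<forall>a b. a \<noteq> b \<longrightarrow> (\<exists>phi. alg_hom_k sc phi \<and> phi a \<noteq> phi b)"
    using contraction_formula_if_commutes_with_translations[OF assms(1) rhoX]
      left_translation_translation_by[OF assms(1)] that
    unfolding condA_def condB_def by blast
  show ?thesis
    using A_imp_B B_imp_A by blast
qed

end
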